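(* Let $\Omega\subseteq\mathbb{R}^N$ be open and bounded, $\sigma(x):=\mathrm{dist}(x,\partial\Omega)$, and let $\eta\in C^\infty(\Omega)$ be such that there exists $\kappa>0$ with $\kappa\sigma(x)^2\le\eta(x)\le\sigma(x)^2$ for every $x\in\Omega$. Let $\rho$, $M_\rho$, $C_n$, $T_n$ be as in the context. Then $$\sup_{n\in\mathbb{N}}\ \sup_{y\in\Omega}\int_\Omega C_n(x)\rho\Big(\frac{x-y}{\frac1n\eta(x)}\Big)\,dx<\infty,$$ and hence $T=T_1$ and $T_n$, $n\in\mathbb{N}$, are bounded linear operators from $L^1(\Omega)$ to $L^1(\Omega)$.
   Context: $\rho\in C_c^\infty(\mathbb{R}^N)$ satisfies $0\le\rho\le1$, $\rho(x)=0$ iff $|x|\ge1$, $\rho$ is radially symmetric, and $\rho(x)\ge\rho(1/2)$ for all $|x|<1/2$. Set $M_\rho:=(\int_{B_1(0)}\rho(y)\,dy)^{-1}$. For $x\in\Omega$ and $n\in\mathbb{N}$ let $C_n(x):=M_\rho n^N/\eta(x)^N$, and for $f\in L^1_{loc}(\Omega)$ let $T_nf(x):=C_n(x)\int_\Omega\rho\big(\frac{x-y}{\frac1n\eta(x)}\big)f(y)\,dy$; $T:=T_1$. *)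

theory Defs
  imports "HOL-Analysis.Analysis"
begin

fun Ck_on :: "nat \<Rightarrow> 'a::euclidean_space set \<Rightarrow> ('a \<Rightarrow> real) \<Rightarrow> bool" where
  "Ck_on 0 S f = continuous_on S f"
| "Ck_on (Suc k) S f = (f differentiable_on S \<and>
      (\<forall>i\<in>Basis. Ck_on k S (\<lambda>x. frechet_derivative f (at x) i)))"

definition smooth_on :: "'a::euclidean_space set \<Rightarrow> ('a \<Rightarrow> real) \<Rightarrow> bool" where
  "smooth_on S f \<longleftrightarrow> (\<forall>k. Ck_on k S f)"

definition Mrho :: "('a::euclidean_space \<Rightarrow> real) \<Rightarrow> real" where
  "Mrho \<rho> = inverse (LINT y:ball 0 1|lebesgue. \<rho> y)"

definition Cn :: "('a::euclidean_space \<Rightarrow> real) \<Rightarrow> ('a \<Rightarrow> real) \<Rightarrow> nat \<Rightarrow> 'a \<Rightarrow> real" where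
  "Cn \<rho> \<eta> n x = Mrho \<rho> * real n ^ DIM('a) / \<eta> x ^ DIM('a)"

definition Tn :: "('a::euclidean_space \<Rightarrow> real) \<Rightarrow> ('a \<Rightarrow> real) \<Rightarrow> 'a set \<Rightarrow> nat
      \<Rightarrow> ('a \<Rightarrow> real) \<Rightarrow> 'a \<Rightarrow> real" where
  "Tn \<rho> \<eta> \<Omega> n f x = Cn \<rho> \<eta> n x *
      (LINT y:\<Omega>|lebesgue. \<rho> ((real n / \<eta> x) *\<^sub>R (x - y)) * f y)"

end

theory Submission
  imports Defs
begin

text \<open>If \<open>\<rho>((x - y) n / \<eta>(x)) \<noteq> 0\<close> then \<open>|x - y| < \<eta>(x)/n \<le> \<sigma>(x)\<^sup>2/n\<close>. Either
  \<open>\<sigma>(x) \<le> n/2\<close>: then \<open>|x - y| < \<sigma>(x)/2\<close>, so \<open>\<sigma>(x)\<close> and \<open>\<sigma>(y)\<close> are comparable, the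
  kernel is at most a constant times \<open>(n/\<sigma>(y)\<^sup>2)\<^sup>N\<close> and vanishes outside the ball of radius
  \<open>4\<sigma>(y)\<^sup>2/n\<close> around \<open>y\<close>, whose volume is a constant times \<open>(\<sigma>(y)\<^sup>2/n)\<^sup>N\<close>. Or
  \<open>\<sigma>(x) > n/2\<close>: then \<open>\<eta>(x) > \<kappa> n\<^sup>2/4\<close> and \<open>C\<^sub>n(x) \<le> M\<^sub>\<rho> (4/\<kappa>)\<^sup>N\<close>. Integrating in \<open>x\<close>
  bounds the columns of the kernel uniformly in \<open>n\<close> and \<open>y\<close>, and by Tonelli (Schur's test)
  such a column bound is a bound for the \<open>L\<^sup>1\<close> operator norm of \<open>T\<^sub>n\<close>.\<close>

lemma infdist_frontier_pos:
  fixes S :: "'a::real_normed_vector set"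
  assumes "open S" "S \<noteq> UNIV" "x \<in> S"
  shows "0 < infdist x (frontier S)"
proof (rule infdist_pos_not_in_closed)
  show "frontier S \<noteq> {}" using assms(2,3) frontier_not_empty by blast
  show "x \<notin> frontier S" using assms(1,3) by (simp add: frontier_def interior_open)
qed auto

lemma sigma_finite_lebesgue: "sigma_finite_measure (lebesgue :: 'a::euclidean_space measure)"
proof
  obtain A :: "'a set set" where "countable A" "A \<subseteq> sets lborel" "\<Union>A = space lborel"
      "\<forall>a\<in>A. emeasure lborel a \<noteq> \<infinity>"
    using lborel.sigma_finite_countable by blast
  then show "\<exists>A. countable A \<and> A \<subseteq> sets (lebesgue::'a measure) \<and> \<Union>A = space lebesgue
      \<and> (\<forall>a\<in>A. emeasure lebesgue a \<noteq> \<infinity>)"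
    by (intro exI[of _ A]) auto
qed

lemma borel_measurable_lebesgueI:
  "f \<in> borel_measurable borel \<Longrightarrow> (f :: 'a::euclidean_space \<Rightarrow> 'b::topological_space) \<in> borel_measurable lebesgue"
  by (metis measurable_lborel2 measurable_completion)

lemma fst_borel_measurable_lebesgue_pair [measurable]:
  "fst \<in> borel_measurable ((lebesgue :: 'a::euclidean_space measure) \<Otimes>\<^sub>M (lebesgue :: 'b::euclidean_space measure))"
  using measurable_compose[OF measurable_fst id_borel_measurable_lebesgue] by (simp add: o_def id_def)

lemma snd_borel_measurable_lebesgue_pair [measurable]:
  "snd \<in> borel_measurable ((lebesgue :: 'a::euclidean_space measure) \<Otimes>\<^sub>M (lebesgue :: 'b::euclidean_space measure))"
  using measurable_compose[OF measurable_snd id_borel_measurable_lebesgue] by (simp add: o_def id_def)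

lemma set_integrable_mult_bounded:
  fixes f g :: "'a \<Rightarrow> real"
  assumes f: "set_integrable M A f" and g: "g \<in> borel_measurable M" and g_bound: "\<And>y. \<bar>g y\<bar> \<le> c"
  shows "set_integrable M A (\<lambda>y. g y * f y)"
proof (rule set_integrable_bound[of M A "\<lambda>y. c * f y"])
  show "set_integrable M A (\<lambda>y. c * f y)" using f by simp
  have "(\<lambda>y. indicator A y *\<^sub>R f y) \<in> borel_measurable M"
    using f by (simp add: set_integrable_def)
  then show "set_borel_measurable M A (\<lambda>y. g y * f y)"
    unfolding set_borel_measurable_def using g by (simp add: mult.left_commute)
  have "\<bar>g y * f y\<bar> \<le> \<bar>c * f y\<bar>" for y
    using g_bound[of y] by (simp add: abs_mult mult_right_mono)
  then show "AE y in M. y \<in> A \<longrightarrow> norm (g y * f y) \<le> norm (c * f y)" by simp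
qed

lemma nn_set_integral_le_indicator_plus_const:
  assumes "A \<in> fmeasurable M" "\<Omega> \<in> fmeasurable M" "0 \<le> a" "0 \<le> c"
    and bound: "\<And>x. x \<in> \<Omega> \<Longrightarrow> f x \<le> a * indicator A x + c"
  shows "(\<integral>\<^sup>+x\<in>\<Omega>. ennreal (f x) \<partial>M) \<le> ennreal (a * measure M A + c * measure M \<Omega>)"
proof -
  have "(\<integral>\<^sup>+x\<in>\<Omega>. ennreal (f x) \<partial>M) \<le> (\<integral>\<^sup>+x. ennreal a * indicator A x + ennreal c * indicator \<Omega> x \<partial>M)"
    using bound assms(3,4)
    by (intro nn_integral_mono)
      (fastforce simp: indicator_def ennreal_plus[symmetric] simp del: ennreal_plus dest: bound)
  also have "\<dots> = ennreal a * emeasure M A + ennreal c * emeasure M \<Omega>"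
    using assms(1,2) by (simp add: nn_integral_add nn_integral_cmult_indicator)
  also have "\<dots> = ennreal (a * measure M A + c * measure M \<Omega>)"
    using assms by (simp add: emeasure_eq_measure2 ennreal_mult)
  finally show ?thesis .
qed

lemma integral_operator_L1_bound:
  fixes k :: "'a \<Rightarrow> 'b \<Rightarrow> real" and f :: "'b \<Rightarrow> real"
  assumes "sigma_finite_measure M" "sigma_finite_measure N"
    and k_meas: "case_prod k \<in> borel_measurable (M \<Otimes>\<^sub>M N)"
    and k_nonneg: "\<And>x y. 0 \<le> k x y"
    and column_bound: "\<And>y. y \<in> space N \<Longrightarrow> (\<integral>\<^sup>+x. k x y \<partial>M) \<le> ennreal B"
    and "B \<ge> 0" and f: "integrable N f"
  shows "integrable M (\<lambda>x. \<integral>y. k x y * f y \<partial>N)"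
    and "(\<integral>x. \<bar>\<integral>y. k x y * f y \<partial>N\<bar> \<partial>M) \<le> B * (\<integral>y. \<bar>f y\<bar> \<partial>N)"
proof -
  interpret N: sigma_finite_measure N by fact
  interpret MN: pair_sigma_finite M N using assms(1,2) by (simp add: pair_sigma_finite_def)
  have f_meas [measurable]: "f \<in> borel_measurable N" using f by (rule borel_measurable_integrable)
  note [measurable] = k_meas
  define T where "T x = (\<integral>y. k x y * f y \<partial>N)" for x
  have T_meas: "T \<in> borel_measurable M"
    unfolding T_def by measurable
  have T_pointwise: "ennreal \<bar>T x\<bar> \<le> (\<integral>\<^sup>+y. k x y * ennreal \<bar>f y\<bar> \<partial>N)" for x
  proof (cases "integrable N (\<lambda>y. k x y * f y)")
    case True
    then have "ennreal \<bar>T x\<bar> \<le> (\<integral>\<^sup>+y. norm (k x y * f y) \<partial>N)"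
      unfolding T_def using integral_norm_bound_ennreal by (metis real_norm_def)
    also have "\<dots> = (\<integral>\<^sup>+y. k x y * ennreal \<bar>f y\<bar> \<partial>N)"
      using k_nonneg by (intro nn_integral_cong) (simp add: abs_mult ennreal_mult)
    finally show ?thesis .
  qed (simp add: T_def not_integrable_integral_eq)
  have f_norm: "(\<integral>\<^sup>+y. ennreal \<bar>f y\<bar> \<partial>N) = ennreal (\<integral>y. \<bar>f y\<bar> \<partial>N)"
    using f by (intro nn_integral_eq_integral) auto
  have "(\<integral>\<^sup>+x. ennreal \<bar>T x\<bar> \<partial>M) \<le> (\<integral>\<^sup>+x. \<integral>\<^sup>+y. k x y * ennreal \<bar>f y\<bar> \<partial>N \<partial>M)"
    by (intro nn_integral_mono T_pointwise)
  also have "\<dots> = (\<integral>\<^sup>+y. \<integral>\<^sup>+x. k x y * ennreal \<bar>f y\<bar> \<partial>M \<partial>N)"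
    by (intro MN.Fubini'[symmetric]) measurable
  also have "\<dots> = (\<integral>\<^sup>+y. (\<integral>\<^sup>+x. k x y \<partial>M) * ennreal \<bar>f y\<bar> \<partial>N)"
    by (intro nn_integral_cong nn_integral_multc) measurable
  also have "\<dots> \<le> (\<integral>\<^sup>+y. ennreal B * ennreal \<bar>f y\<bar> \<partial>N)"
    by (intro nn_integral_mono mult_right_mono column_bound) auto
  also have "\<dots> = ennreal (B * (\<integral>y. \<bar>f y\<bar> \<partial>N))"
    using \<open>B \<ge> 0\<close> by (simp add: nn_integral_cmult f_norm ennreal_mult)
  finally have T_norm: "(\<integral>\<^sup>+x. ennreal \<bar>T x\<bar> \<partial>M) \<le> ennreal (B * (\<integral>y. \<bar>f y\<bar> \<partial>N))" .
  show T_int: "integrable M T"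
    using T_norm by (intro integrableI_bounded T_meas) (simp add: le_less_trans)
  have "ennreal (\<integral>x. \<bar>T x\<bar> \<partial>M) = (\<integral>\<^sup>+x. ennreal \<bar>T x\<bar> \<partial>M)"
    using T_int by (intro nn_integral_eq_integral[symmetric]) auto
  with T_norm have "ennreal (\<integral>x. \<bar>T x\<bar> \<partial>M) \<le> ennreal (B * (\<integral>y. \<bar>f y\<bar> \<partial>N))"
    by simp
  then show "(\<integral>x. \<bar>T x\<bar> \<partial>M) \<le> B * (\<integral>y. \<bar>f y\<bar> \<partial>N)"
    using \<open>B \<ge> 0\<close> by (simp add: integral_nonneg_AE)
qed

lemma inverse_scale_bound_cases:
  fixes sx sy d e n \<kappa> :: real
  assumes "0 < \<kappa>" "1 \<le> n" "0 < sx" "0 < sy" "\<bar>sx - sy\<bar> \<le> d"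
    and "\<kappa> * sx\<^sup>2 \<le> e" "e \<le> sx\<^sup>2" "d < e / n"
  shows "(n / e \<le> 9 / (4 * \<kappa>) * (n / sy\<^sup>2) \<and> d < 4 * sy\<^sup>2 / n) \<or> n / e \<le> 4 / \<kappa>"
proof -
  have e_pos: "0 < e" using assms(1,3,6) by (smt (verit) mult_pos_pos zero_less_power)
  have d_lt: "d < sx\<^sup>2 / n" using assms(2,7,8) by (smt (verit) divide_right_mono)
  show ?thesis
  proof (cases "sx \<le> n / 2")
    case True
    have "sx\<^sup>2 / n \<le> sx / 2" using True assms(2,3) by (simp add: power2_eq_square field_simps)
    with d_lt assms(5) have sx_lt: "sx < 2 * sy" and sx_ge: "2 * sy / 3 \<le> sx" by linarith+
    have "sx\<^sup>2 < (2 * sy)\<^sup>2" using sx_lt assms(3) by (intro power_strict_mono) auto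
    then have "sx\<^sup>2 / n < 4 * sy\<^sup>2 / n" using assms(2) by (simp add: divide_strict_right_mono)
    with d_lt have "d < 4 * sy\<^sup>2 / n" by linarith
    moreover have "\<kappa> * (4 * sy\<^sup>2 / 9) \<le> e"
    proof -
      have "(2 * sy / 3)\<^sup>2 \<le> sx\<^sup>2" using sx_ge assms(4) by (intro power_mono) auto
      then have "\<kappa> * (4 * sy\<^sup>2 / 9) \<le> \<kappa> * sx\<^sup>2" using assms(1) by (simp add: power2_eq_square)
      with assms(6) show ?thesis by linarith
    qed
    then have "n / e \<le> n / (\<kappa> * (4 * sy\<^sup>2 / 9))"
      using assms(1,2,4) e_pos by (intro divide_left_mono) auto
    then have "n / e \<le> 9 / (4 * \<kappa>) * (n / sy\<^sup>2)" using assms(1,4) by (simp add: field_simps)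
    ultimately show ?thesis by blast
  next
    case False
    have "\<kappa> * (n\<^sup>2 / 4) \<le> e"
    proof -
      have "(n / 2)\<^sup>2 \<le> sx\<^sup>2" using False assms(2) by (intro power_mono) auto
      then have "\<kappa> * (n\<^sup>2 / 4) \<le> \<kappa> * sx\<^sup>2" using assms(1) by (simp add: power2_eq_square)
      with assms(6) show ?thesis by linarith
    qed
    then have "n / e \<le> n / (\<kappa> * (n\<^sup>2 / 4))"
      using assms(1,2) e_pos by (intro divide_left_mono) auto
    also have "\<dots> = 4 / \<kappa> / n" using assms(1,2) by (simp add: field_simps power2_eq_square)
    also have "\<dots> \<le> 4 / \<kappa>" using assms(1,2) by (simp add: divide_le_eq)
    finally show ?thesis by blast
  qed
qed

lemma smooth_on_imp_continuous_on: "smooth_on S f \<Longrightarrow> continuous_on S f"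
  by (metis smooth_on_def Ck_on.simps(1))

lemma Mrho_nonneg: "(\<And>z. 0 \<le> \<rho> z) \<Longrightarrow> 0 \<le> Mrho \<rho>"
  unfolding Mrho_def set_lebesgue_integral_def by (simp add: integral_nonneg_AE)

lemma Cn_eq: "Cn \<rho> \<eta> n x = Mrho \<rho> * (real n / \<eta> x) ^ DIM('a)"
  for \<eta> :: "'a::euclidean_space \<Rightarrow> real"
  by (simp add: Cn_def power_divide)

lemma Cn_nonneg: "(\<And>z. 0 \<le> \<rho> z) \<Longrightarrow> 0 < \<eta> x \<Longrightarrow> 0 \<le> Cn \<rho> \<eta> n x"
  by (simp add: Cn_eq Mrho_nonneg)

lemma Cn_kernel_pointwise_bound:
  fixes \<Omega> :: "'a::euclidean_space set"
  assumes "open \<Omega>" "\<Omega> \<noteq> UNIV" "0 < \<kappa>"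
    and \<eta>_bounds: "\<forall>x\<in>\<Omega>. \<kappa> * (infdist x (frontier \<Omega>))\<^sup>2 \<le> \<eta> x \<and> \<eta> x \<le> (infdist x (frontier \<Omega>))\<^sup>2"
    and \<rho>_range: "\<And>z. 0 \<le> \<rho> z \<and> \<rho> z \<le> 1" and \<rho>_supp: "\<And>z. \<rho> z \<noteq> 0 \<Longrightarrow> norm z < 1"
    and n: "1 \<le> n" and x: "x \<in> \<Omega>" and y: "y \<in> \<Omega>"
  defines "s \<equiv> infdist y (frontier \<Omega>)"
  shows "Cn \<rho> \<eta> n x * \<rho> ((real n / \<eta> x) *\<^sub>R (x - y))
    \<le> Mrho \<rho> * (9 / (4 * \<kappa>)) ^ DIM('a) * (n / s\<^sup>2) ^ DIM('a) * indicator (ball y (4 * s\<^sup>2 / n)) x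
      + Mrho \<rho> * (4 / \<kappa>) ^ DIM('a)"
    (is "?K \<le> ?near * indicator ?ball x + ?far")
proof -
  define sx where "sx = infdist x (frontier \<Omega>)"
  have sx: "0 < sx" and s: "0 < s"
    using infdist_frontier_pos[OF assms(1,2)] x y by (auto simp: sx_def s_def)
  have e_lo: "\<kappa> * sx\<^sup>2 \<le> \<eta> x" and e_hi: "\<eta> x \<le> sx\<^sup>2" using \<eta>_bounds x by (auto simp: sx_def)
  have e_pos: "0 < \<eta> x" using e_lo assms(3) sx by (smt (verit) mult_pos_pos zero_less_power)
  have M: "0 \<le> Mrho \<rho>" using \<rho>_range by (simp add: Mrho_nonneg)
  have near_nonneg: "0 \<le> ?near" and far_nonneg: "0 \<le> ?far" using M assms(3) s by simp_all
  show ?thesis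
  proof (cases "\<rho> ((real n / \<eta> x) *\<^sub>R (x - y)) = 0")
    case True
    then show ?thesis using near_nonneg far_nonneg by simp
  next
    case False
    have "real n / \<eta> x * dist x y < 1"
      using \<rho>_supp[OF False] e_pos by (simp add: dist_norm)
    then have close: "dist x y < \<eta> x / n" using e_pos n by (simp add: field_simps)
    have "\<bar>sx - s\<bar> \<le> dist x y"
      using infdist_triangle[of x "frontier \<Omega>" y] infdist_triangle[of y "frontier \<Omega>" x]
      by (auto simp: sx_def s_def dist_commute)
    then have cases: "(n / \<eta> x \<le> 9 / (4 * \<kappa>) * (n / s\<^sup>2) \<and> dist x y < 4 * s\<^sup>2 / n) \<or> n / \<eta> x \<le> 4 / \<kappa>"
      using inverse_scale_bound_cases[OF assms(3) _ sx s _ e_lo e_hi close] n by simp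
    have "?K \<le> Mrho \<rho> * (n / \<eta> x) ^ DIM('a)"
      using Cn_nonneg[of \<rho> \<eta> x n] \<rho>_range e_pos
      by (metis Cn_eq mult_left_le)
    also have "\<dots> \<le> ?near * indicator ?ball x + ?far"
      using cases
    proof
      assume "n / \<eta> x \<le> 9 / (4 * \<kappa>) * (n / s\<^sup>2) \<and> dist x y < 4 * s\<^sup>2 / n"
      then have pow: "(n / \<eta> x) ^ DIM('a) \<le> (9 / (4 * \<kappa>) * (n / s\<^sup>2)) ^ DIM('a)"
        and "x \<in> ?ball"
        using e_pos by (auto simp: dist_commute intro: power_mono)
      have "Mrho \<rho> * (n / \<eta> x) ^ DIM('a) \<le> Mrho \<rho> * (9 / (4 * \<kappa>) * (n / s\<^sup>2)) ^ DIM('a)"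
        using pow M by (rule mult_left_mono)
      then have "Mrho \<rho> * (n / \<eta> x) ^ DIM('a) \<le> ?near"
        by (simp only: power_mult_distrib mult.assoc)
      with \<open>x \<in> ?ball\<close> show ?thesis using far_nonneg by simp
    next
      assume "n / \<eta> x \<le> 4 / \<kappa>"
      then have "Mrho \<rho> * (n / \<eta> x) ^ DIM('a) \<le> ?far"
        using M e_pos by (simp add: mult_left_mono power_mono)
      then show ?thesis using near_nonneg by (simp add: add_increasing)
    qed
    finally show ?thesis .
  qed
qed

lemma Cn_kernel_column_bound:
  fixes \<Omega> :: "'a::euclidean_space set"
  assumes "open \<Omega>" "bounded \<Omega>" "0 < \<kappa>"
    and \<eta>_bounds: "\<forall>x\<in>\<Omega>. \<kappa> * (infdist x (frontier \<Omega>))\<^sup>2 \<le> \<eta> x \<and> \<eta> x \<le> (infdist x (frontier \<Omega>))\<^sup>2"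
    and \<rho>_range: "\<And>z. 0 \<le> \<rho> z \<and> \<rho> z \<le> 1" and \<rho>_supp: "\<And>z. \<rho> z \<noteq> 0 \<Longrightarrow> norm z < 1"
  obtains B where "0 \<le> B" and "\<And>n y. 1 \<le> n \<Longrightarrow> y \<in> \<Omega> \<Longrightarrow>
    (\<integral>\<^sup>+x\<in>\<Omega>. ennreal (Cn \<rho> \<eta> n x * \<rho> ((real n / \<eta> x) *\<^sub>R (x - y))) \<partial>lebesgue) \<le> ennreal B"
proof -
  define N where "N = DIM('a)"
  define near where "near = Mrho \<rho> * (9 / (4 * \<kappa>)) ^ N"
  define far where "far = Mrho \<rho> * (4 / \<kappa>) ^ N"
  define B where "B = near * 4 ^ N * measure lebesgue (ball (0::'a) 1) + far * measure lebesgue \<Omega>"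
  have \<Omega>: "\<Omega> \<in> lmeasurable" "\<Omega> \<noteq> UNIV" using assms(1,2) by (auto simp: lmeasurable_open)
  have "near \<ge> 0" "far \<ge> 0" using assms(3) \<rho>_range by (simp_all add: near_def far_def Mrho_nonneg)
  then have "B \<ge> 0" by (simp add: B_def)
  moreover have "(\<integral>\<^sup>+x\<in>\<Omega>. ennreal (Cn \<rho> \<eta> n x * \<rho> ((real n / \<eta> x) *\<^sub>R (x - y))) \<partial>lebesgue)
      \<le> ennreal B" if n: "n \<ge> 1" and y: "y \<in> \<Omega>" for n :: nat and y
  proof -
    define s where "s = infdist y (frontier \<Omega>)"
    define r where "r = 4 * s\<^sup>2 / n"
    have "0 < s" using infdist_frontier_pos[OF assms(1) \<Omega>(2) y] by (simp add: s_def)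
    then have r: "0 \<le> r" and "n / s\<^sup>2 * r = 4" using n by (simp_all add: r_def)
    then have ball_term: "near * (n / s\<^sup>2) ^ N * measure lebesgue (ball y r)
        = near * 4 ^ N * measure lebesgue (ball (0::'a) 1)"
      using content_ball_conv_unit_ball[OF r, of y] by (simp add: N_def power_mult_distrib[symmetric])
    have "(\<integral>\<^sup>+x\<in>\<Omega>. ennreal (Cn \<rho> \<eta> n x * \<rho> ((real n / \<eta> x) *\<^sub>R (x - y))) \<partial>lebesgue)
        \<le> ennreal (near * (n / s\<^sup>2) ^ N * measure lebesgue (ball y r) + far * measure lebesgue \<Omega>)"
    proof (rule nn_set_integral_le_indicator_plus_const)
      show "near * (n / s\<^sup>2) ^ N \<ge> 0" using \<open>near \<ge> 0\<close> by simp
      show "Cn \<rho> \<eta> n x * \<rho> ((real n / \<eta> x) *\<^sub>R (x - y))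
          \<le> near * (n / s\<^sup>2) ^ N * indicator (ball y r) x + far" if "x \<in> \<Omega>" for x
        using Cn_kernel_pointwise_bound[OF assms(1) \<Omega>(2) assms(3) \<eta>_bounds \<rho>_range \<rho>_supp n that y]
        by (simp add: near_def far_def N_def s_def r_def)
    qed (use \<Omega> \<open>far \<ge> 0\<close> in auto)
    then show ?thesis unfolding ball_term B_def .
  qed
  ultimately show ?thesis by (rule that)
qed

lemma set_integrable_Tn_kernel:
  fixes \<rho> :: "'a::euclidean_space \<Rightarrow> real"
  assumes "\<rho> \<in> borel_measurable borel" "\<And>z. \<bar>\<rho> z\<bar> \<le> c" "set_integrable lebesgue \<Omega> f"
  shows "set_integrable lebesgue \<Omega> (\<lambda>y. \<rho> (t *\<^sub>R (x - y)) * f y)"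
proof (rule set_integrable_mult_bounded[OF assms(3) _ assms(2)])
  note [measurable] = assms(1)
  show "(\<lambda>y. \<rho> (t *\<^sub>R (x - y))) \<in> borel_measurable lebesgue"
    by (intro borel_measurable_lebesgueI) measurable
qed

lemma Tn_linear:
  fixes \<rho> :: "'a::euclidean_space \<Rightarrow> real"
  assumes "\<rho> \<in> borel_measurable borel" "\<And>z. \<bar>\<rho> z\<bar> \<le> c"
    and f: "set_integrable lebesgue \<Omega> f" and g: "set_integrable lebesgue \<Omega> g"
  shows "Tn \<rho> \<eta> \<Omega> n (\<lambda>y. a * f y + b * g y) x = a * Tn \<rho> \<eta> \<Omega> n f x + b * Tn \<rho> \<eta> \<Omega> n g x"
proof -
  let ?h = "\<lambda>y. \<rho> ((real n / \<eta> x) *\<^sub>R (x - y))"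
  have "set_integrable lebesgue \<Omega> (\<lambda>y. ?h y * f y)" "set_integrable lebesgue \<Omega> (\<lambda>y. ?h y * g y)"
    using set_integrable_Tn_kernel[OF assms(1,2)] f g by blast+
  then have "(LINT y:\<Omega>|lebesgue. ?h y * (a * f y + b * g y))
      = a * (LINT y:\<Omega>|lebesgue. ?h y * f y) + b * (LINT y:\<Omega>|lebesgue. ?h y * g y)"
    by (simp add: algebra_simps)
  then show ?thesis by (simp add: Tn_def algebra_simps)
qed

lemma Tn_L1_bound:
  fixes \<Omega> :: "'a::euclidean_space set" and f :: "'a \<Rightarrow> real"
  assumes "open \<Omega>" "continuous_on \<Omega> \<eta>" and \<eta>_pos: "\<And>x. x \<in> \<Omega> \<Longrightarrow> 0 < \<eta> x"
    and \<rho>_meas: "\<rho> \<in> borel_measurable borel" and \<rho>_nonneg: "\<And>z. 0 \<le> \<rho> z"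
    and "0 \<le> B" and column_bound: "\<And>y. y \<in> \<Omega> \<Longrightarrow>
      (\<integral>\<^sup>+x\<in>\<Omega>. ennreal (Cn \<rho> \<eta> n x * \<rho> ((real n / \<eta> x) *\<^sub>R (x - y))) \<partial>lebesgue) \<le> ennreal B"
    and f: "set_integrable lebesgue \<Omega> f"
  shows "set_integrable lebesgue \<Omega> (Tn \<rho> \<eta> \<Omega> n f)"
    and "(LINT x:\<Omega>|lebesgue. \<bar>Tn \<rho> \<eta> \<Omega> n f x\<bar>) \<le> B * (LINT y:\<Omega>|lebesgue. \<bar>f y\<bar>)"
proof -
  \<comment> \<open>\<open>\<eta>\<close> is arbitrary outside \<open>\<Omega>\<close>; setting it to 1 there makes the kernel
    jointly measurable.\<close>
  define e where "e x = (if x \<in> \<Omega> then \<eta> x else 1)" for x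
  define k where "k x y = indicator \<Omega> x * indicator \<Omega> y * (Cn \<rho> e n x * \<rho> ((real n / e x) *\<^sub>R (x - y)))"
    for x y
  define f\<Omega> where "f\<Omega> = (\<lambda>y. indicator \<Omega> y * f y)"
  have [measurable]: "\<Omega> \<in> sets lebesgue" "\<Omega> \<in> sets borel" using assms(1) by simp_all
  have [measurable]: "e \<in> borel_measurable lebesgue"
    unfolding e_def using assms(1,2)
    by (intro borel_measurable_lebesgueI borel_measurable_continuous_on_if) (auto intro: continuous_on_const)
  note [measurable] = \<rho>_meas
  have k_meas: "case_prod k \<in> borel_measurable (lebesgue \<Otimes>\<^sub>M lebesgue)"
    unfolding k_def Cn_def by measurable
  have k_nonneg: "0 \<le> k x y" for x y
    using \<rho>_nonneg \<eta>_pos Cn_nonneg[of \<rho> e x n] by (simp add: k_def e_def)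
  have column: "(\<integral>\<^sup>+x. k x y \<partial>lebesgue) \<le> ennreal B" for y
  proof (cases "y \<in> \<Omega>")
    case True
    have "(\<integral>\<^sup>+x. k x y \<partial>lebesgue)
        = (\<integral>\<^sup>+x\<in>\<Omega>. ennreal (Cn \<rho> \<eta> n x * \<rho> ((real n / \<eta> x) *\<^sub>R (x - y))) \<partial>lebesgue)"
      using True by (intro nn_integral_cong) (simp add: k_def e_def Cn_def indicator_def)
    with column_bound[OF True] show ?thesis by simp
  qed (simp add: k_def)
  have f\<Omega>: "integrable lebesgue f\<Omega>" using f by (simp add: set_integrable_def f\<Omega>_def)
  have Tn_eq: "(\<integral>y. k x y * f\<Omega> y \<partial>lebesgue) = indicator \<Omega> x * Tn \<rho> \<eta> \<Omega> n f x" for x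
  proof (cases "x \<in> \<Omega>")
    case True
    then have "k x y * f\<Omega> y = Cn \<rho> \<eta> n x * (indicator \<Omega> y *\<^sub>R (\<rho> ((real n / \<eta> x) *\<^sub>R (x - y)) * f y))"
      for y by (simp add: k_def f\<Omega>_def e_def Cn_def indicator_def)
    with True show ?thesis by (simp add: Tn_def set_lebesgue_integral_def)
  qed (simp add: k_def)
  note L1 = integral_operator_L1_bound[OF sigma_finite_lebesgue sigma_finite_lebesgue
      k_meas k_nonneg column \<open>0 \<le> B\<close> f\<Omega>, unfolded Tn_eq]
  show "set_integrable lebesgue \<Omega> (Tn \<rho> \<eta> \<Omega> n f)"
    using L1(1) by (simp add: set_integrable_def)
  show "(LINT x:\<Omega>|lebesgue. \<bar>Tn \<rho> \<eta> \<Omega> n f x\<bar>) \<le> B * (LINT y:\<Omega>|lebesgue. \<bar>f y\<bar>)"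
    using L1(2) by (simp add: set_lebesgue_integral_def f\<Omega>_def abs_mult)
qed

theorem theorem5p3:
  fixes \<Omega> :: "'a::euclidean_space set" and \<eta> \<rho> :: "'a \<Rightarrow> real" and \<kappa> :: real
  assumes "open \<Omega>" and "bounded \<Omega>"
    and "smooth_on \<Omega> \<eta>"
    and "\<kappa> > 0"
    and "\<forall>x\<in>\<Omega>. \<kappa> * (infdist x (frontier \<Omega>))\<^sup>2 \<le> \<eta> x \<and> \<eta> x \<le> (infdist x (frontier \<Omega>))\<^sup>2"
    and "smooth_on UNIV \<rho>" and "compact (closure {x. \<rho> x \<noteq> 0})"
    and "\<forall>x. 0 \<le> \<rho> x \<and> \<rho> x \<le> 1"
    and "\<forall>x. \<rho> x = 0 \<longleftrightarrow> norm x \<ge> 1"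
    and "\<forall>x y. norm x = norm y \<longrightarrow> \<rho> x = \<rho> y"
    and "\<forall>x z. norm x < 1/2 \<longrightarrow> norm z = 1/2 \<longrightarrow> \<rho> z \<le> \<rho> x"
  shows "(\<exists>B::real. \<forall>n::nat. n \<ge> 1 \<longrightarrow> (\<forall>y\<in>\<Omega>.
            (\<integral>\<^sup>+x\<in>\<Omega>. ennreal (Cn \<rho> \<eta> n x * \<rho> ((real n / \<eta> x) *\<^sub>R (x - y))) \<partial>lebesgue)
              \<le> ennreal B))
    \<and> (\<forall>n::nat. n \<ge> 1 \<longrightarrow> (\<forall>f g (a::real) b. set_integrable lebesgue \<Omega> f \<longrightarrow>
            set_integrable lebesgue \<Omega> g \<longrightarrow>
            (\<forall>x\<in>\<Omega>. Tn \<rho> \<eta> \<Omega> n (\<lambda>y. a * f y + b * g y) x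
                      = a * Tn \<rho> \<eta> \<Omega> n f x + b * Tn \<rho> \<eta> \<Omega> n g x)))
    \<and> (\<exists>K::real. \<forall>n::nat. n \<ge> 1 \<longrightarrow> (\<forall>f. set_integrable lebesgue \<Omega> f \<longrightarrow>
            (\<forall>x\<in>\<Omega>. set_integrable lebesgue \<Omega> (\<lambda>y. \<rho> ((real n / \<eta> x) *\<^sub>R (x - y)) * f y))
            \<and> set_integrable lebesgue \<Omega> (Tn \<rho> \<eta> \<Omega> n f)
            \<and> (LINT x:\<Omega>|lebesgue. \<bar>Tn \<rho> \<eta> \<Omega> n f x\<bar>) \<le> K * (LINT y:\<Omega>|lebesgue. \<bar>f y\<bar>)))"
proof -
  have \<Omega>_proper: "\<Omega> \<noteq> UNIV" using assms(2) by auto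
  have \<rho>_meas: "\<rho> \<in> borel_measurable borel"
    using assms(6) by (intro borel_measurable_continuous_onI smooth_on_imp_continuous_on)
  have \<rho>_range: "0 \<le> \<rho> z \<and> \<rho> z \<le> 1" for z using assms(8) by blast
  then have \<rho>_nonneg: "0 \<le> \<rho> z" and \<rho>_abs: "\<bar>\<rho> z\<bar> \<le> 1" for z by (simp_all add: abs_le_iff)
  have \<rho>_supp: "norm z < 1" if "\<rho> z \<noteq> 0" for z using assms(9) that by force
  have \<eta>_pos: "0 < \<eta> x" if "x \<in> \<Omega>" for x
  proof -
    have "0 < \<kappa> * (infdist x (frontier \<Omega>))\<^sup>2"
      using assms(4) infdist_frontier_pos[OF assms(1) \<Omega>_proper that] by simp
    also have "\<dots> \<le> \<eta> x" using assms(5) that by blast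
    finally show ?thesis .
  qed
  obtain B where "0 \<le> B" and column_bound: "\<And>n y. 1 \<le> n \<Longrightarrow> y \<in> \<Omega> \<Longrightarrow>
      (\<integral>\<^sup>+x\<in>\<Omega>. ennreal (Cn \<rho> \<eta> n x * \<rho> ((real n / \<eta> x) *\<^sub>R (x - y))) \<partial>lebesgue) \<le> ennreal B"
    using Cn_kernel_column_bound[where \<rho> = \<rho>, OF assms(1,2,4,5) \<rho>_range \<rho>_supp] by blast
  note L1_bound = Tn_L1_bound[OF assms(1) smooth_on_imp_continuous_on[OF assms(3)] _ \<rho>_meas
      \<rho>_nonneg \<open>0 \<le> B\<close>]
  show ?thesis
    apply (intro conjI exI[of _ B] allI impI ballI)
    subgoal by (rule column_bound)
    subgoal by (rule Tn_linear[OF \<rho>_meas \<rho>_abs])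
    subgoal by (rule set_integrable_Tn_kernel[OF \<rho>_meas \<rho>_abs])
    subgoal by (rule L1_bound(1)) (simp_all add: \<eta>_pos column_bound)
    subgoal by (rule L1_bound(2)) (simp_all add: \<eta>_pos column_bound)
    done
qed

end
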